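(* Let $\Omega\subset\mathbf{R}^2$ be a convex bounded domain whose boundary $\gamma$ is a smooth simple closed curve with curvature $k$ satisfying $0<\beta<\min_\gamma k$, and let $r=1/\beta$. Let $F$ be a real polynomial on $\mathbf{R}^2$ such that for every $s$ and every $\epsilon$ in a neighborhood of $0$, $$F\big(\gamma(s)+rR_{-\epsilon}J\dot\gamma(s)\big)=F\big(\gamma(s)-rR_{\epsilon}J\dot\gamma(s)\big).$$ Then $F$ is constant on $\gamma_{+r}\cup\gamma_{-r}$, i.e. there is a constant $c$ with $F|_{\gamma_{+r}}=F|_{\gamma_{-r}}=c$.
   Context: $\gamma(s)$ is the arc-length parametrization of $\gamma$ in counterclockwise direction, $J$ is counterclockwise rotation by $\pi/2$, $R_\epsilon$ is counterclockwise rotation by angle $\epsilon$. The parallel curves are $\gamma_{\pm r}(s)=\gamma(s)\pm rJ\dot\gamma(s)$. The displayed identity expresses that $F$ takes equal values at the center of a positive Larmor circle (radius $r$) hitting $\gamma$ at $\gamma(s)$ at angle $\epsilon$ and at the center of the reflected negative Larmor circle in the two-sided magnetic billiard (billiard in which the magnetic field changes sign after each reflection). *)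

theory Defs
  imports "HOL-Analysis.Analysis"
begin

text \<open>We identify \<open>R^2\<close> with \<open>\<complex>\<close>: \<open>J\<close> is multiplication by \<open>\<i>\<close>,
  \<open>R_\<epsilon>\<close> is multiplication by \<open>cis \<epsilon>\<close>.\<close>

definition vderiv :: "(real \<Rightarrow> complex) \<Rightarrow> real \<Rightarrow> complex" where
  "vderiv f = (\<lambda>t. vector_derivative f (at t))"

definition nderiv :: "nat \<Rightarrow> (real \<Rightarrow> complex) \<Rightarrow> real \<Rightarrow> complex" where
  "nderiv n f = (vderiv ^^ n) f"

definition smooth_curve :: "(real \<Rightarrow> complex) \<Rightarrow> bool" where
  "smooth_curve f \<longleftrightarrow> (\<forall>n t. nderiv n f differentiable (at t))"

text \<open>Signed curvature of an arc-length parametrized curve: \<open>\<gamma>'' = k J \<gamma>'\<close>.\<close>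
definition curvature :: "(real \<Rightarrow> complex) \<Rightarrow> real \<Rightarrow> real" where
  "curvature f s = Im (cnj (nderiv 1 f s) * nderiv 2 f s)"

definition polynomial2 :: "(complex \<Rightarrow> real) \<Rightarrow> bool" where
  "polynomial2 F \<longleftrightarrow> (\<exists>N (a :: nat \<Rightarrow> nat \<Rightarrow> real).
      \<forall>z. F z = (\<Sum>i\<le>N. \<Sum>j\<le>N. a i j * Re z ^ i * Im z ^ j))"

end

theory Submission
  imports Defs
begin

text \<open>Write \<open>T = \<gamma>'\<close>, so that \<open>T' = k J T\<close>, and let \<open>a(s)\<close>, \<open>b(s)\<close> be the derivatives of \<open>F\<close> in
  direction \<open>T(s)\<close> at \<open>\<gamma>\<^sub>+\<^sub>r(s)\<close> and \<open>\<gamma>\<^sub>-\<^sub>r(s)\<close>. Differentiating the hypothesis in \<open>\<epsilon>\<close> at \<open>0\<close>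
  moves both circle centres with velocity \<open>r T(s)\<close>, so \<open>a = b\<close>. At \<open>\<epsilon> = 0\<close> it says
  \<open>F \<circ> \<gamma>\<^sub>+\<^sub>r = F \<circ> \<gamma>\<^sub>-\<^sub>r\<close>; since \<open>\<gamma>\<^sub>\<plusminus>\<^sub>r' = (1 \<mp> r k) T\<close>, differentiating in \<open>s\<close> gives
  \<open>(1 - r k) a = (1 + r k) b\<close>, hence \<open>r k a = 0\<close> and \<open>a = 0\<close>. So \<open>F\<close> is constant along
  \<open>\<gamma>\<^sub>+\<^sub>r\<close>, with the same value on \<open>\<gamma>\<^sub>-\<^sub>r\<close>.\<close>

lemma has_real_derivative_compose_vector:
  fixes F :: "'a::real_normed_vector \<Rightarrow> real"
  assumes "(g has_vector_derivative v) (at x)" and "(F has_derivative D) (at (g x))"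
  shows "((\<lambda>t. F (g t)) has_real_derivative D v) (at x)"
proof -
  have "((\<lambda>t. F (g t)) has_derivative (\<lambda>h. D (h *\<^sub>R v))) (at x)"
    using has_derivative_compose[OF assms(1)[unfolded has_vector_derivative_def] assms(2)] .
  moreover have "(\<lambda>h. D (h *\<^sub>R v)) = (*) (D v)"
    using linear_scale[OF has_derivative_linear[OF assms(2)]] by (auto simp: mult.commute)
  ultimately show ?thesis by (simp add: has_field_derivative_def)
qed

lemma rotation_has_vector_derivative:
  "((\<lambda>\<epsilon>. p + cis (c * \<epsilon>) * w) has_vector_derivative of_real c * \<i> * w) (at 0)"
proof -
  have "((\<lambda>\<epsilon>. cis (c * \<epsilon>)) has_derivative (\<lambda>t. (c * t) *\<^sub>R (\<i> * cis (c * 0)))) (at 0)"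
    by (intro has_derivative_cis has_derivative_mult_right has_derivative_ident)
  then have "((\<lambda>\<epsilon>. cis (c * \<epsilon>)) has_vector_derivative of_real c * \<i>) (at 0)"
    by (simp add: has_vector_derivative_def scaleR_conv_of_real ac_simps)
  from has_vector_derivative_add[OF has_vector_derivative_const has_vector_derivative_mult_left[OF this]]
  show ?thesis by simp
qed

lemma reflected_circle_derivative_eq:
  fixes F :: "complex \<Rightarrow> real"
  assumes dFp: "(F has_derivative Dp) (at (p + w))" and dFm: "(F has_derivative Dm) (at (p - w))"
    and "\<delta> > 0" and eq: "\<forall>\<epsilon>. \<bar>\<epsilon>\<bar> < \<delta> \<longrightarrow> F (p + cis (-\<epsilon>) * w) = F (p - cis \<epsilon> * w)"
  shows "Dp (\<i> * w) = Dm (\<i> * w)"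
proof -
  have "((\<lambda>\<epsilon>. F (p + cis (-1 * \<epsilon>) * w)) has_real_derivative Dp (- \<i> * w)) (at 0)"
    using has_real_derivative_compose_vector[OF rotation_has_vector_derivative[of p "-1" w]] dFp by simp
  then have "((\<lambda>\<epsilon>. F (p + cis (1 * \<epsilon>) * (- w))) has_real_derivative Dp (- \<i> * w)) (at 0)"
    by (rule has_field_derivative_transform_within_open[of _ _ _ "ball 0 \<delta>"])
      (use \<open>\<delta> > 0\<close> eq in auto)
  moreover have "((\<lambda>\<epsilon>. F (p + cis (1 * \<epsilon>) * (- w))) has_real_derivative Dm (- \<i> * w)) (at 0)"
    using has_real_derivative_compose_vector[OF rotation_has_vector_derivative[of p 1 "-w"]] dFm by simp
  ultimately have "Dp (- (\<i> * w)) = Dm (- (\<i> * w))"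
    using DERIV_unique by fastforce
  then show ?thesis
    using linear_neg[OF has_derivative_linear[OF dFp]] linear_neg[OF has_derivative_linear[OF dFm]]
    by simp
qed

lemma polynomial2_differentiable:
  assumes "polynomial2 F"
  shows "F differentiable (at z)"
proof -
  obtain N a where "\<forall>z. F z = (\<Sum>i\<le>N. \<Sum>j\<le>N. a i j * Re z ^ i * Im z ^ j)"
    using assms unfolding polynomial2_def by blast
  then have "F = (\<lambda>z. \<Sum>i\<le>N. \<Sum>j\<le>N. a i j * Re z ^ i * Im z ^ j)"
    by auto
  then show ?thesis
    using bounded_linear_imp_differentiable[OF bounded_linear_Re]
      bounded_linear_imp_differentiable[OF bounded_linear_Im]
    by (auto intro!: differentiable_sum differentiable_mult differentiable_power)
qed

lemma nderiv_has_vector_derivative: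
  assumes "smooth_curve g"
  shows "(nderiv n g has_vector_derivative nderiv (Suc n) g t) (at t)"
  using assms unfolding smooth_curve_def
  by (metis vector_derivative_works nderiv_def vderiv_def funpow.simps(2) o_apply)

lemma unit_speed_frenet:
  assumes "smooth_curve g" and unit: "\<forall>s. norm (nderiv 1 g s) = 1"
  shows "nderiv 2 g s = \<i> * of_real (curvature g s) * nderiv 1 g s"
proof -
  define T where "T = nderiv 1 g"
  define N where "N = nderiv 2 g"
  have T_unit: "T t * cnj (T t) = 1" for t
    using unit by (simp add: T_def complex_norm_square[symmetric])
  have "(T has_vector_derivative N s) (at s)"
    using nderiv_has_vector_derivative[OF assms(1), of 1 s] by (simp add: T_def N_def numeral_2_eq_2)
  from has_vector_derivative_mult[OF this has_vector_derivative_cnj[OF this]]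
  have "((\<lambda>t. 1) has_vector_derivative T s * cnj (N s) + N s * cnj (T s)) (at s)"
    by (simp add: T_unit)
  then have "T s * cnj (N s) + N s * cnj (T s) = 0"
    using vector_derivative_unique_at has_vector_derivative_const by metis
  then have "Re (cnj (T s) * N s) = 0"
    by (simp add: complex_eq_iff algebra_simps)
  then have "cnj (T s) * N s = \<i> * of_real (curvature g s)"
    by (simp add: complex_eq_iff curvature_def T_def N_def)
  then have "N s = T s * (\<i> * of_real (curvature g s))"
    using T_unit[of s] by (metis mult.assoc mult.commute mult_1)
  then show ?thesis
    by (simp add: T_def N_def ac_simps)
qed

lemma parallel_curve_has_real_derivative:
  fixes F :: "complex \<Rightarrow> real"
  assumes dF: "(F has_derivative D) (at (\<gamma> s + of_real \<rho> * \<i> * T s))"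
    and d\<gamma>: "(\<gamma> has_vector_derivative T s) (at s)"
    and dT: "(T has_vector_derivative \<i> * of_real k * T s) (at s)"
  shows "((\<lambda>s. F (\<gamma> s + of_real \<rho> * \<i> * T s)) has_real_derivative (1 - \<rho> * k) * D (T s)) (at s)"
proof -
  have "((\<lambda>s. \<gamma> s + of_real \<rho> * \<i> * T s) has_vector_derivative (1 - \<rho> * k) *\<^sub>R T s) (at s)"
    using has_vector_derivative_add[OF d\<gamma> has_vector_derivative_mult_right[OF dT, of "of_real \<rho> * \<i>"]]
    by (simp add: scaleR_conv_of_real algebra_simps)
  from has_real_derivative_compose_vector[OF this dF]
  show ?thesis
    using linear_scale[OF has_derivative_linear[OF dF]] by simp
qed

lemma parallel_curves_level:
  fixes F :: "complex \<Rightarrow> real"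
  assumes dF: "\<And>z. (F has_derivative D z) (at z)"
    and d\<gamma>: "\<And>s. (\<gamma> has_vector_derivative T s) (at s)"
    and dT: "\<And>s. (T has_vector_derivative \<i> * of_real (k s) * T s) (at s)"
    and rk: "\<And>s. r * k s \<noteq> 0"
    and eq: "\<And>s. F (\<gamma> s + of_real r * \<i> * T s) = F (\<gamma> s - of_real r * \<i> * T s)"
    and deq: "\<And>s. D (\<gamma> s + of_real r * \<i> * T s) (T s) = D (\<gamma> s - of_real r * \<i> * T s) (T s)"
  shows "\<exists>c. \<forall>s. F (\<gamma> s + of_real r * \<i> * T s) = c \<and> F (\<gamma> s - of_real r * \<i> * T s) = c"
proof -
  define p where "p s = \<gamma> s + of_real r * \<i> * T s" for s
  have "((\<lambda>s. F (p s)) has_real_derivative 0) (at s)" for s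
  proof -
    have plus: "((\<lambda>s. F (p s)) has_real_derivative (1 - r * k s) * D (p s) (T s)) (at s)"
      unfolding p_def by (rule parallel_curve_has_real_derivative[OF dF d\<gamma> dT])
    have "((\<lambda>s. F (\<gamma> s - of_real r * \<i> * T s)) has_real_derivative
        (1 + r * k s) * D (\<gamma> s - of_real r * \<i> * T s) (T s)) (at s)"
      using parallel_curve_has_real_derivative[OF dF d\<gamma> dT, where \<rho> = "- r"] by simp
    then have minus: "((\<lambda>s. F (p s)) has_real_derivative (1 + r * k s) * D (p s) (T s)) (at s)"
      unfolding p_def eq deq .
    have "(1 - r * k s) * D (p s) (T s) = (1 + r * k s) * D (p s) (T s)"
      using DERIV_unique[OF plus minus] .
    then have "D (p s) (T s) = 0"
      using rk[of s] by (simp add: algebra_simps)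
    with plus show ?thesis
      by simp
  qed
  then have "F (p s) = F (p 0)" for s
    by (intro DERIV_isconst_all allI)
  then show ?thesis
    by (intro exI[of _ "F (p 0)"] allI conjI) (simp_all only: p_def [symmetric] eq [symmetric])
qed

theorem proposition5p4:
  fixes \<Omega> :: "complex set" and \<gamma> :: "real \<Rightarrow> complex" and L \<beta> r :: real
    and F :: "complex \<Rightarrow> real"
  assumes "open \<Omega>" and "convex \<Omega>" and "bounded \<Omega>" and "connected \<Omega>" and "\<Omega> \<noteq> {}"
    and "L > 0"
    and "smooth_curve \<gamma>"
    and "\<forall>s. \<gamma> (s + L) = \<gamma> s"
    and "inj_on \<gamma> {0..<L}"
    and "\<forall>s. norm (nderiv 1 \<gamma> s) = 1"
    and "frontier \<Omega> = \<gamma> ` {0..L}"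
    and "\<forall>s. \<exists>\<delta>>0. \<forall>t. 0 < t \<and> t < \<delta> \<longrightarrow> \<gamma> s + of_real t * \<i> * nderiv 1 \<gamma> s \<in> \<Omega>"
    and "0 < \<beta>" and "\<forall>s. \<beta> < curvature \<gamma> s"
    and "r = 1 / \<beta>"
    and "polynomial2 F"
    and "\<exists>\<delta>>0. \<forall>s \<epsilon>. \<bar>\<epsilon>\<bar> < \<delta> \<longrightarrow>
           F (\<gamma> s + of_real r * cis (-\<epsilon>) * \<i> * nderiv 1 \<gamma> s)
         = F (\<gamma> s - of_real r * cis \<epsilon> * \<i> * nderiv 1 \<gamma> s)"
  shows "\<exists>c. \<forall>s. F (\<gamma> s + of_real r * \<i> * nderiv 1 \<gamma> s) = c
                \<and> F (\<gamma> s - of_real r * \<i> * nderiv 1 \<gamma> s) = c"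
proof -
  obtain \<delta> where "\<delta> > 0" and reflect: "\<forall>s \<epsilon>. \<bar>\<epsilon>\<bar> < \<delta> \<longrightarrow>
      F (\<gamma> s + of_real r * cis (-\<epsilon>) * \<i> * nderiv 1 \<gamma> s)
    = F (\<gamma> s - of_real r * cis \<epsilon> * \<i> * nderiv 1 \<gamma> s)"
    using assms(17) by blast
  define D where "D z = frechet_derivative F (at z)" for z
  have dF: "(F has_derivative D z) (at z)" for z
    unfolding D_def using polynomial2_differentiable[OF assms(16)] frechet_derivative_works by blast
  have d\<gamma>: "(\<gamma> has_vector_derivative nderiv 1 \<gamma> s) (at s)" for s
    using nderiv_has_vector_derivative[OF assms(7), of 0] by (simp add: nderiv_def)
  have dT: "(nderiv 1 \<gamma> has_vector_derivative \<i> * of_real (curvature \<gamma> s) * nderiv 1 \<gamma> s) (at s)" for s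
    using nderiv_has_vector_derivative[OF assms(7), of 1] unit_speed_frenet[OF assms(7,10)]
    by (simp add: numeral_2_eq_2)
  have "r > 0" and rk: "r * curvature \<gamma> s \<noteq> 0" for s
    using assms(13-15) less_trans[of 0 \<beta> "curvature \<gamma> s"] by auto
  have deq: "D (\<gamma> s + of_real r * \<i> * nderiv 1 \<gamma> s) (nderiv 1 \<gamma> s)
           = D (\<gamma> s - of_real r * \<i> * nderiv 1 \<gamma> s) (nderiv 1 \<gamma> s)" for s
  proof -
    define w where "w = of_real r * \<i> * nderiv 1 \<gamma> s"
    have "\<forall>\<epsilon>. \<bar>\<epsilon>\<bar> < \<delta> \<longrightarrow> F (\<gamma> s + cis (-\<epsilon>) * w) = F (\<gamma> s - cis \<epsilon> * w)"
      using reflect by (simp add: w_def ac_simps)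
    from reflected_circle_derivative_eq[OF dF dF \<open>\<delta> > 0\<close> this]
    have "D (\<gamma> s + w) (\<i> * w) = D (\<gamma> s - w) (\<i> * w)" .
    moreover have "\<i> * w = (- r) *\<^sub>R nderiv 1 \<gamma> s"
      by (simp add: w_def scaleR_conv_of_real complex_eq_iff)
    ultimately have "(- r) *\<^sub>R D (\<gamma> s + w) (nderiv 1 \<gamma> s) = (- r) *\<^sub>R D (\<gamma> s - w) (nderiv 1 \<gamma> s)"
      by (simp only: linear_scale[OF has_derivative_linear[OF dF]])
    then show ?thesis
      using \<open>r > 0\<close> by (simp add: w_def)
  qed
  have eq: "F (\<gamma> s + of_real r * \<i> * nderiv 1 \<gamma> s) = F (\<gamma> s - of_real r * \<i> * nderiv 1 \<gamma> s)" for s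
    using reflect \<open>\<delta> > 0\<close> by (metis abs_zero cis_zero minus_zero mult_1_right)
  show ?thesis
    by (rule parallel_curves_level[OF dF d\<gamma> dT rk eq deq])
qed

end
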